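(* Let $(R,B)$ be an EIC problem with problem graph $G=(V,E)$ and sender neighborhoods $N_1,\dots,N_n$, and let $\mathscr C=\{V(C): C \text{ is a maximal clique in } G|_{N_i}\text{ for some } i\}$. For every cover $\mathcal C=\{C_j\}\subseteq\mathscr C$ of $V$, there is a neighborhood partition $(\tilde N_1,\dots,\tilde N_n)$ such that $$\sum_{C_j\in\mathcal C}\chi\big(\overline{G|_{C_j}}\big)\ge\sum_{i=1}^n\chi\big(\overline{G|_{\tilde N_i}}\big).$$
   Context: An EIC problem is a pair $(R,B)$ of matrices in $\mathbb{F}_2^{n\times m}$ with disjoint supports (node $u$ needs block $a$ iff $R_{ua}=1$, has it iff $B_{ua}=1$). $P=\{(u,a):R_{ua}=1\}$. The problem graph $G=(V,E)$ has vertices $V=\{v_{(u,a)}:(u,a)\in P\}$ and a directed edge from $v_{(u,a)}$ to $v_{(w,b)}$ iff $B_{ub}=1$ or $a=b$; $G|_S$ is the subgraph induced on $S$. Sender neighborhood of node $k$: $N_k=\{v_{(w,b)}\in V:B_{kb}=1\}$. A neighborhood partition is a tuple $(\tilde N_1,\dots,\tilde N_n)$ with $\tilde N_i\subseteq N_i$, pairwise disjoint, union $V$. For a directed graph $H$ (loops disregarded): $\overline H$ has edge $(x,y)$, $x\ne y$, iff $(x,y)\notin E(H)$; a clique is a vertex set in which every ordered pair of distinct vertices is an edge (maximal if not properly contained in another clique); an independent set contains no edge in either direction; $\chi(H)$ is the minimum number of independent sets partitioning the vertex set ($0$ if empty). A cover of $V$ by elements of $\mathscr C$ is a collection of members of $\mathscr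 C$ whose union is $V$. *)

theory Defs
  imports Main
begin

text \<open>EIC problem: n nodes, m blocks; matrices over F_2 represented as boolean
  functions on indices (u < n, a < m). Node indices are 0..n-1.\<close>

definition eic_problem :: "nat \<Rightarrow> nat \<Rightarrow> (nat \<Rightarrow> nat \<Rightarrow> bool) \<Rightarrow> (nat \<Rightarrow> nat \<Rightarrow> bool) \<Rightarrow> bool" where
  "eic_problem n m R B \<longleftrightarrow> (\<forall>u<n. \<forall>a<m. \<not> (R u a \<and> B u a))"

definition pg_vertices :: "nat \<Rightarrow> nat \<Rightarrow> (nat \<Rightarrow> nat \<Rightarrow> bool) \<Rightarrow> (nat \<times> nat) set" where
  "pg_vertices n m R = {(u, a). u < n \<and> a < m \<and> R u a}"

definition pg_edge :: "(nat \<Rightarrow> nat \<Rightarrow> bool) \<Rightarrow> nat \<times> nat \<Rightarrow> nat \<times> nat \<Rightarrow> bool" where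
  "pg_edge B x y \<longleftrightarrow> (case x of (u, a) \<Rightarrow> case y of (w, b) \<Rightarrow> B u b \<or> a = b)"

definition sender_nbhd :: "nat \<Rightarrow> nat \<Rightarrow> (nat \<Rightarrow> nat \<Rightarrow> bool) \<Rightarrow> (nat \<Rightarrow> nat \<Rightarrow> bool) \<Rightarrow> nat \<Rightarrow> (nat \<times> nat) set" where
  "sender_nbhd n m R B k = {v \<in> pg_vertices n m R. B k (snd v)}"

text \<open>A directed graph given by a vertex set S and edge relation E (loops disregarded).
  Induced subgraph on S' is (S', E).\<close>

definition compl_edge :: "('a \<Rightarrow> 'a \<Rightarrow> bool) \<Rightarrow> 'a \<Rightarrow> 'a \<Rightarrow> bool" where
  "compl_edge E x y \<longleftrightarrow> x \<noteq> y \<and> \<not> E x y"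

definition is_clique :: "('a \<Rightarrow> 'a \<Rightarrow> bool) \<Rightarrow> 'a set \<Rightarrow> 'a set \<Rightarrow> bool" where
  "is_clique E S C \<longleftrightarrow> C \<subseteq> S \<and> (\<forall>x\<in>C. \<forall>y\<in>C. x \<noteq> y \<longrightarrow> E x y)"

definition is_max_clique :: "('a \<Rightarrow> 'a \<Rightarrow> bool) \<Rightarrow> 'a set \<Rightarrow> 'a set \<Rightarrow> bool" where
  "is_max_clique E S C \<longleftrightarrow> is_clique E S C \<and> \<not> (\<exists>C'. is_clique E S C' \<and> C \<subset> C')"

definition is_indep :: "('a \<Rightarrow> 'a \<Rightarrow> bool) \<Rightarrow> 'a set \<Rightarrow> 'a set \<Rightarrow> bool" where
  "is_indep E S I \<longleftrightarrow> I \<subseteq> S \<and> (\<forall>x\<in>I. \<forall>y\<in>I. x \<noteq> y \<longrightarrow> \<not> E x y \<and> \<not> E y x)"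

definition chromatic :: "('a \<Rightarrow> 'a \<Rightarrow> bool) \<Rightarrow> 'a set \<Rightarrow> nat" where
  "chromatic E S = (LEAST k. \<exists>P. finite P \<and> card P = k \<and> \<Union>P = S \<and>
      (\<forall>I\<in>P. I \<noteq> {} \<and> is_indep E S I) \<and>
      (\<forall>I\<in>P. \<forall>J\<in>P. I \<noteq> J \<longrightarrow> I \<inter> J = {}))"

definition max_clique_family :: "nat \<Rightarrow> nat \<Rightarrow> (nat \<Rightarrow> nat \<Rightarrow> bool) \<Rightarrow> (nat \<Rightarrow> nat \<Rightarrow> bool) \<Rightarrow> (nat \<times> nat) set set" where
  "max_clique_family n m R B =
     {C. \<exists>i<n. is_max_clique (pg_edge B) (sender_nbhd n m R B i) C}"

definition nbhd_partition :: "nat \<Rightarrow> nat \<Rightarrow> (nat \<Rightarrow> nat \<Rightarrow> bool) \<Rightarrow> (nat \<Rightarrow> nat \<Rightarrow> bool) \<Rightarrow> (nat \<Rightarrow> (nat \<times> nat) set) \<Rightarrow> bool" where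
  "nbhd_partition n m R B Nt \<longleftrightarrow>
     (\<forall>i<n. Nt i \<subseteq> sender_nbhd n m R B i) \<and>
     (\<forall>i<n. \<forall>j<n. i \<noteq> j \<longrightarrow> Nt i \<inter> Nt j = {}) \<and>
     (\<Union>i<n. Nt i) = pg_vertices n m R"

end

theory Submission
  imports Defs
begin

text \<open>Send every vertex to one clique of the cover containing it and every clique to one
  sender neighbourhood containing it, and let \<open>Nt i\<close> consist of the vertices whose clique
  was sent to \<open>i\<close>. The cliques sent to \<open>i\<close> cut \<open>Nt i\<close> into independent sets of the
  complement graph, so they colour it, whereas every nonempty clique contributes exactly
  one colour to the left-hand side.\<close>

lemma chromatic_le_card_partition:
  assumes "finite P" "\<Union>P = S" "\<forall>I\<in>P. I \<noteq> {} \<and> is_indep E S I"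
    "\<forall>I\<in>P. \<forall>J\<in>P. I \<noteq> J \<longrightarrow> I \<inter> J = {}"
  shows "chromatic E S \<le> card P"
  unfolding chromatic_def by (rule Least_le) (use assms in blast)

lemma chromatic_compl_clique:
  assumes "is_clique E X C" "C \<noteq> {}"
  shows "chromatic (compl_edge E) C = 1"
proof -
  let ?colouring = "\<lambda>k. \<exists>P. finite P \<and> card P = k \<and> \<Union>P = C \<and>
      (\<forall>I\<in>P. I \<noteq> {} \<and> is_indep (compl_edge E) C I) \<and>
      (\<forall>I\<in>P. \<forall>J\<in>P. I \<noteq> J \<longrightarrow> I \<inter> J = {})"
  have "?colouring 1"
    using assms by (intro exI[of _ "{C}"]) (auto simp: is_indep_def is_clique_def compl_edge_def)
  then have "?colouring (chromatic (compl_edge E) C)"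
    unfolding chromatic_def by (rule LeastI)
  with assms(2) have "chromatic (compl_edge E) C \<noteq> 0" by auto
  moreover have "chromatic (compl_edge E) C \<le> 1"
    unfolding chromatic_def using \<open>?colouring 1\<close> by (rule Least_le)
  ultimately show ?thesis by simp
qed

lemma chromatic_compl_le_card_clique_labelling:
  assumes "finite (f ` S)"
    and clique_fibres: "\<And>x y. x \<in> S \<Longrightarrow> y \<in> S \<Longrightarrow> x \<noteq> y \<Longrightarrow> f x = f y \<Longrightarrow> E x y"
  shows "chromatic (compl_edge E) S \<le> card (f ` S)"
proof -
  define fibre where "fibre a = {x \<in> S. f x = a}" for a
  have "chromatic (compl_edge E) S \<le> card (fibre ` f ` S)"
  proof (rule chromatic_le_card_partition)
    show "finite (fibre ` f ` S)" using assms(1) by simp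
    show "\<Union> (fibre ` f ` S) = S" by (auto simp: fibre_def)
    show "\<forall>I\<in>fibre ` f ` S. I \<noteq> {} \<and> is_indep (compl_edge E) S I"
      using clique_fibres by (auto simp: fibre_def is_indep_def compl_edge_def)
    show "\<forall>I\<in>fibre ` f ` S. \<forall>J\<in>fibre ` f ` S. I \<noteq> J \<longrightarrow> I \<inter> J = {}"
      by (auto simp: fibre_def)
  qed
  also have "\<dots> \<le> card (f ` S)" using assms(1) by (rule card_image_le)
  finally show ?thesis .
qed

theorem clique_cover_nbhd_partition:
  fixes N :: "nat \<Rightarrow> 'a set"
  assumes "finite V" "\<Union>\<C> = V" "\<And>C. C \<in> \<C> \<Longrightarrow> \<exists>i<n. is_clique E (N i) C"
  shows "\<exists>Nt. (\<forall>i<n. Nt i \<subseteq> N i) \<and> (\<forall>i<n. \<forall>j<n. i \<noteq> j \<longrightarrow> Nt i \<inter> Nt j = {}) \<and>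
           (\<Union>i<n. Nt i) = V \<and>
           (\<Sum>i<n. chromatic (compl_edge E) (Nt i)) \<le> (\<Sum>C\<in>\<C>. chromatic (compl_edge E) C)"
proof -
  define cl where "cl v = (SOME C. C \<in> \<C> \<and> v \<in> C)" for v
  define idx where "idx C = (SOME i. i < n \<and> is_clique E (N i) C)" for C
  define Nt where "Nt i = {v \<in> V. idx (cl v) = i}" for i
  have fin_\<C>: "finite \<C>"
    using assms(1,2) by (metis Sup_upper finite_UnionD)
  have cl: "cl v \<in> \<C> \<and> v \<in> cl v" if "v \<in> V" for v
    unfolding cl_def by (rule someI_ex) (use that assms(2) in blast)
  have idx: "idx C < n \<and> is_clique E (N (idx C)) C" if "C \<in> \<C>" for C
    unfolding idx_def by (rule someI_ex) (use that assms(3) in blast)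
  have cl_image: "cl ` Nt i \<subseteq> {C \<in> \<C>. idx C = i}" for i
    using cl by (auto simp: Nt_def)
  have "chromatic (compl_edge E) (Nt i) \<le> (\<Sum>C\<in>{C \<in> \<C>. idx C = i}. chromatic (compl_edge E) C)"
    for i
  proof -
    have "finite (Nt i)"
      using assms(1) by (simp add: Nt_def)
    then have "chromatic (compl_edge E) (Nt i) \<le> card (cl ` Nt i)"
    proof (intro chromatic_compl_le_card_clique_labelling finite_imageI)
      fix x y assume "x \<in> Nt i" "y \<in> Nt i" "x \<noteq> y" "cl x = cl y"
      then have "x \<in> cl x" "y \<in> cl x" "cl x \<in> \<C>"
        using cl by (auto simp: Nt_def)
      then show "E x y"
        using idx[of "cl x"] \<open>x \<noteq> y\<close> unfolding is_clique_def by blast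
    qed
    also have "\<dots> = (\<Sum>C\<in>cl ` Nt i. chromatic (compl_edge E) C)"
    proof -
      have "chromatic (compl_edge E) C = 1" if "C \<in> cl ` Nt i" for C
      proof -
        from that obtain v where "v \<in> V" "C = cl v"
          by (auto simp: Nt_def)
        with cl have "C \<in> \<C>" "C \<noteq> {}" by auto
        with idx show ?thesis
          by (meson chromatic_compl_clique)
      qed
      then show ?thesis by simp
    qed
    also have "\<dots> \<le> (\<Sum>C\<in>{C \<in> \<C>. idx C = i}. chromatic (compl_edge E) C)"
      using fin_\<C> cl_image by (intro sum_mono2) auto
    finally show ?thesis .
  qed
  then have "(\<Sum>i<n. chromatic (compl_edge E) (Nt i))
      \<le> (\<Sum>i<n. \<Sum>C\<in>{C \<in> \<C>. idx C = i}. chromatic (compl_edge E) C)"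
    by (rule sum_mono)
  also have "\<dots> = (\<Sum>C\<in>\<C>. chromatic (compl_edge E) C)"
    using fin_\<C> idx by (intro sum.group) auto
  finally have bound: "(\<Sum>i<n. chromatic (compl_edge E) (Nt i)) \<le> (\<Sum>C\<in>\<C>. chromatic (compl_edge E) C)" .
  have "Nt i \<subseteq> N i" for i
  proof
    fix v assume "v \<in> Nt i"
    then have "v \<in> cl v" "cl v \<in> \<C>" "idx (cl v) = i"
      using cl by (auto simp: Nt_def)
    then show "v \<in> N i"
      using idx[of "cl v"] unfolding is_clique_def by blast
  qed
  moreover have "(\<Union>i<n. Nt i) = V"
    using cl idx by (auto simp: Nt_def)
  moreover have "\<forall>i<n. \<forall>j<n. i \<noteq> j \<longrightarrow> Nt i \<inter> Nt j = {}"
    by (auto simp: Nt_def)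
  ultimately show ?thesis
    using bound by blast
qed

theorem lemma7:
  fixes n m :: nat and R B :: "nat \<Rightarrow> nat \<Rightarrow> bool" and \<C> :: "(nat \<times> nat) set set"
  assumes "eic_problem n m R B"
    and "\<C> \<subseteq> max_clique_family n m R B"
    and "\<Union>\<C> = pg_vertices n m R"
  shows "\<exists>Nt. nbhd_partition n m R B Nt \<and>
           (\<Sum>C\<in>\<C>. chromatic (compl_edge (pg_edge B)) C)
             \<ge> (\<Sum>i<n. chromatic (compl_edge (pg_edge B)) (Nt i))"
proof -
  have "finite (pg_vertices n m R)"
    by (rule finite_subset[of _ "{..<n} \<times> {..<m}"]) (auto simp: pg_vertices_def)
  moreover have "\<exists>i<n. is_clique (pg_edge B) (sender_nbhd n m R B i) C" if "C \<in> \<C>" for C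
    using that assms(2) by (auto simp: max_clique_family_def is_max_clique_def)
  ultimately show ?thesis
    using clique_cover_nbhd_partition[OF _ assms(3)] by (simp add: nbhd_partition_def)
qed

end
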